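(* There exist finite category presentations $D$ and $E$ and a profunctor $\mathcal Q:[\![D]\!]\nrightarrow[\![E]\!]$ which is finitely uncurried presentable but not finitely curried presentable.
   Context: Category presentation $C$: sorts, function symbols $f:c\to c'$, set $C_E$ of equations between parallel paths (paths are composable lists $f_0.\cdots.f_{n-1}$ of function symbols or empty paths $1_c$); finite if these sets are finite. $\approx_C$: smallest equivalence relation on paths containing $C_E$ closed under concatenation with composable function symbols on either side; $[\![C]\!]$: objects sorts, morphisms $\approx_C$-classes $[p]$ of paths. Profunctors $\mathcal P:\mathcal C\nrightarrow\mathcal D$: categories over $\mathbf 2=\{0\to 1\}$ with fibres $\mathcal C,\mathcal D$; equivalently functors $\mathcal C^{op}\times\mathcal D\to\mathbf{Set}$, $\mathcal P(c,d)$ being the cross-morphisms $c\to d$. Isomorphism is taken in $\mathbf{Prof}(\mathcal C,\mathcal D)$ (functors over $\mathbf 2$ that are identities on $\mathcal C,\mathcal D$). Uncurried presentation $P:C\nrightarrow D$: a set $\mathrm{Fun}(P)$ of symbols $x:c\to d$ ($c\in\mathrm{Sort}(C)$, $d\in\mathrm{Sort}(D)$) and a set $P_E$ of equations between cross-paths (paths from a $C$-sort to a $D$-sort) of the category presentation $|P|$ with sorts $\mathrm{Sort}(C)+\mathrm{Sort}(D)$, symbols $\mathrm{Fun}(C)+\mathrm{Fun}(P)+\mathrm{Fun}(D)$, equations $C_E+P_E+D_E$. Finite if $C,D,\mathrm{Fun}(P),P_E$ are finite. Semantics $[\![P]\!]=[\![|P|]\!]$ over $\mathbf 2$. $\mathcal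 P$ is finitely uncurried presentable if $\mathcal P\cong[\![P]\!]$ for some finite uncurried $P:C\nrightarrow D$. Instance presentations: $1$ is the category presentation with one sort $*$ and no function symbols or equations. A $C$-instance presentation $I$ is an uncurried presentation $1\nrightarrow C$; its symbols $x:*\to c$ are called generators, written $x:c$; its cross-paths are terms, each of the form $x.g$ with $x$ a generator and $g$ a $C$-path. Finite if $\mathrm{Gen}(I)$ and $I_E$ are finite. $[\![I]\!]:[\![C]\!]\to\mathbf{Set}$ sends $c$ to the set of $\approx_I$-classes of terms of type $c$, with $[g]$ acting by $[t]\mapsto[t.g]$. A morphism $F:I\to J$ of $C$-instance presentations maps each generator $x:c$ of $I$ to a term $F(x):c$ of $J$ such that $F(x).g\approx_J F(y).h$ for every equation $x.g=y.h$ of $I_E$; it acts on terms by $F(x.g):=F(x).g$; and $F\approx G$ iff $F(x)\approx_J G(x)$ for all generators. Curried presentations: a curried profunctor presentation $P:C\nrightarrow D$ assigns to each sort $c$ of $C$ a $D$-instance presentation $P(c)$ and to each function symbol $f:c\to c'$ of $C$ a $D$-instance morphism $P(f):P(c')\to P(c)$, such that $P(p)\approx P(p')$ for each equation $p=p'$ of $C_E$, where $P(f_1.\cdots.f_n):=P(f_n)\circ\cdots\circ P(f_1)$ and $P(1_c)$ is the identity. It is finite if $C$, $D$ and all $P(c)$ are finite. Its semantics is the profunctor $[\![P]\!]:[\![C]\!]\nrightarrow[\![D]\!]$ with $[\![P]\!](c,d)=[\![P(c)]\!](d)$ and $[f]$ acting via $[\![P(f)]\!]$. $\mathcal P$ is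 finitely curried presentable if $\mathcal P\cong[\![P]\!]$ for some finite curried $P:C\nrightarrow D$. *)

theory Defs
  imports Main
begin

text \<open>A path is represented by its source sort together with the list of its function
symbols in diagrammatic order; the empty path 1_c is (c, []).\<close>
type_synonym ('s,'f) path = "'s \<times> 'f list"

record ('s,'f) catpres =
  Sorts :: "'s set"
  Funs  :: "'f set"
  fdom  :: "'f \<Rightarrow> 's"
  fcod  :: "'f \<Rightarrow> 's"
  Eqs   :: "(('s,'f) path \<times> ('s,'f) path) set"

fun chain :: "('s,'f,'m) catpres_scheme \<Rightarrow> 's \<Rightarrow> 'f list \<Rightarrow> bool" where
  "chain C c [] = True"
| "chain C c (f # fs) = (f \<in> Funs C \<and> fdom C f = c \<and> chain C (fcod C f) fs)"

fun pend :: "('s,'f,'m) catpres_scheme \<Rightarrow> 's \<Rightarrow> 'f list \<Rightarrow> 's" where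
  "pend C c [] = c"
| "pend C c (f # fs) = pend C (fcod C f) fs"

definition is_path :: "('s,'f,'m) catpres_scheme \<Rightarrow> 's \<Rightarrow> 's \<Rightarrow> ('s,'f) path \<Rightarrow> bool" where
  "is_path C c c' p \<longleftrightarrow> fst p = c \<and> c \<in> Sorts C \<and> chain C c (snd p) \<and> pend C c (snd p) = c'"

definition pcomp :: "('s,'f) path \<Rightarrow> ('s,'f) path \<Rightarrow> ('s,'f) path" where
  "pcomp p q = (fst p, snd p @ snd q)"

definition wf_catpres :: "('s,'f,'m) catpres_scheme \<Rightarrow> bool" where
  "wf_catpres C \<longleftrightarrow>
     (\<forall>f\<in>Funs C. fdom C f \<in> Sorts C \<and> fcod C f \<in> Sorts C) \<and>
     (\<forall>(p,q)\<in>Eqs C. \<exists>c c'. is_path C c c' p \<and> is_path C c c' q)"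

definition finite_catpres :: "('s,'f,'m) catpres_scheme \<Rightarrow> bool" where
  "finite_catpres C \<longleftrightarrow> finite (Sorts C) \<and> finite (Funs C) \<and> finite (Eqs C)"

inductive peq :: "('s,'f,'m) catpres_scheme \<Rightarrow> ('s,'f) path \<Rightarrow> ('s,'f) path \<Rightarrow> bool"
  for C where
  peq_eq:    "(p, q) \<in> Eqs C \<Longrightarrow> peq C p q"
| peq_refl:  "is_path C c c' p \<Longrightarrow> peq C p p"
| peq_sym:   "peq C p q \<Longrightarrow> peq C q p"
| peq_trans: "peq C p q \<Longrightarrow> peq C q r \<Longrightarrow> peq C p r"
| peq_right: "peq C p q \<Longrightarrow> is_path C c c' p \<Longrightarrow> f \<in> Funs C \<Longrightarrow> fdom C f = c' \<Longrightarrow>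
              peq C (pcomp p (c', [f])) (pcomp q (c', [f]))"
| peq_left:  "peq C p q \<Longrightarrow> is_path C c c' p \<Longrightarrow> f \<in> Funs C \<Longrightarrow> fcod C f = c \<Longrightarrow>
              peq C (pcomp (fdom C f, [f]) p) (pcomp (fdom C f, [f]) q)"

definition pclass :: "('s,'f,'m) catpres_scheme \<Rightarrow> ('s,'f) path \<Rightarrow> ('s,'f) path set" where
  "pclass C p = {q. peq C p q}"

text \<open>Morphisms of [[D]] are represented by paths; actions must respect \<approx>.
El c d is the set of cross-morphisms c -> d; Lact p acts contravariantly (p : c -> c'
sends El c' d to El c d), Ract q covariantly.\<close>
record ('s1,'f1,'s2,'f2,'x) prof =
  El   :: "'s1 \<Rightarrow> 's2 \<Rightarrow> 'x set"
  Lact :: "('s1,'f1) path \<Rightarrow> 's2 \<Rightarrow> 'x \<Rightarrow> 'x"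
  Ract :: "('s2,'f2) path \<Rightarrow> 's1 \<Rightarrow> 'x \<Rightarrow> 'x"

definition is_profunctor ::
  "('s1,'f1) catpres \<Rightarrow> ('s2,'f2) catpres \<Rightarrow> ('s1,'f1,'s2,'f2,'x) prof \<Rightarrow> bool" where
  "is_profunctor D E Q \<longleftrightarrow>
     (\<forall>p c c' d x. is_path D c c' p \<longrightarrow> d \<in> Sorts E \<longrightarrow> x \<in> El Q c' d \<longrightarrow>
        Lact Q p d x \<in> El Q c d) \<and>
     (\<forall>q d d' c x. is_path E d d' q \<longrightarrow> c \<in> Sorts D \<longrightarrow> x \<in> El Q c d \<longrightarrow>
        Ract Q q c x \<in> El Q c d') \<and>
     (\<forall>c d x. c \<in> Sorts D \<longrightarrow> d \<in> Sorts E \<longrightarrow> x \<in> El Q c d \<longrightarrow>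
        Lact Q (c, []) d x = x \<and> Ract Q (d, []) c x = x) \<and>
     (\<forall>p p' c c' c'' d x. is_path D c c' p \<longrightarrow> is_path D c' c'' p' \<longrightarrow> d \<in> Sorts E \<longrightarrow>
        x \<in> El Q c'' d \<longrightarrow> Lact Q (pcomp p p') d x = Lact Q p d (Lact Q p' d x)) \<and>
     (\<forall>q q' d d' d'' c x. is_path E d d' q \<longrightarrow> is_path E d' d'' q' \<longrightarrow> c \<in> Sorts D \<longrightarrow>
        x \<in> El Q c d \<longrightarrow> Ract Q (pcomp q q') c x = Ract Q q' c (Ract Q q c x)) \<and>
     (\<forall>p p' c c' d x. peq D p p' \<longrightarrow> is_path D c c' p \<longrightarrow> d \<in> Sorts E \<longrightarrow>
        x \<in> El Q c' d \<longrightarrow> Lact Q p d x = Lact Q p' d x) \<and>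
     (\<forall>q q' d d' c x. peq E q q' \<longrightarrow> is_path E d d' q \<longrightarrow> c \<in> Sorts D \<longrightarrow>
        x \<in> El Q c d \<longrightarrow> Ract Q q c x = Ract Q q' c x) \<and>
     (\<forall>p q c c' d d' x. is_path D c c' p \<longrightarrow> is_path E d d' q \<longrightarrow> x \<in> El Q c' d \<longrightarrow>
        Lact Q p d' (Ract Q q c' x) = Ract Q q c (Lact Q p d x))"

definition prof_iso ::
  "('s1,'f1) catpres \<Rightarrow> ('s2,'f2) catpres \<Rightarrow> ('s1,'f1,'s2,'f2,'x) prof \<Rightarrow>
   ('s1,'f1,'s2,'f2,'y) prof \<Rightarrow> bool" where
  "prof_iso D E Q Q' \<longleftrightarrow> (\<exists>\<phi> :: 's1 \<Rightarrow> 's2 \<Rightarrow> 'x \<Rightarrow> 'y.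
     (\<forall>c\<in>Sorts D. \<forall>d\<in>Sorts E. bij_betw (\<phi> c d) (El Q c d) (El Q' c d)) \<and>
     (\<forall>p c c' d x. is_path D c c' p \<longrightarrow> d \<in> Sorts E \<longrightarrow> x \<in> El Q c' d \<longrightarrow>
        \<phi> c d (Lact Q p d x) = Lact Q' p d (\<phi> c' d x)) \<and>
     (\<forall>q d d' c x. is_path E d d' q \<longrightarrow> c \<in> Sorts D \<longrightarrow> x \<in> El Q c d \<longrightarrow>
        \<phi> c d' (Ract Q q c x) = Ract Q' q c (\<phi> c d x)))"

text \<open>Symbols of |P| are Fun(C) + Fun(P) + Fun(D), encoded as 'f1 + ('g + 'f2).\<close>
record ('s1,'f1,'s2,'f2,'g) upres =
  Gens :: "'g set"
  gsrc :: "'g \<Rightarrow> 's1"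
  gtgt :: "'g \<Rightarrow> 's2"
  UEqs :: "((('s1 + 's2), ('f1 + 'g + 'f2)) path \<times> (('s1 + 's2), ('f1 + 'g + 'f2)) path) set"

definition liftL :: "('s1,'f1) path \<Rightarrow> ('s1 + 's2, 'f1 + 'g + 'f2) path" where
  "liftL p = (Inl (fst p), map Inl (snd p))"

definition liftR :: "('s2,'f2) path \<Rightarrow> ('s1 + 's2, 'f1 + 'g + 'f2) path" where
  "liftR p = (Inr (fst p), map (Inr \<circ> Inr) (snd p))"

definition total :: "('s1,'f1) catpres \<Rightarrow> ('s2,'f2) catpres \<Rightarrow> ('s1,'f1,'s2,'f2,'g) upres \<Rightarrow>
    ('s1 + 's2, 'f1 + 'g + 'f2) catpres" where
  "total D E P = \<lparr> Sorts = Inl ` Sorts D \<union> Inr ` Sorts E,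
     Funs = Inl ` Funs D \<union> (Inr \<circ> Inl) ` Gens P \<union> (Inr \<circ> Inr) ` Funs E,
     fdom = case_sum (\<lambda>f. Inl (fdom D f)) (case_sum (\<lambda>x. Inl (gsrc P x)) (\<lambda>f. Inr (fdom E f))),
     fcod = case_sum (\<lambda>f. Inl (fcod D f)) (case_sum (\<lambda>x. Inr (gtgt P x)) (\<lambda>f. Inr (fcod E f))),
     Eqs = (\<lambda>(p,q). (liftL p, liftL q)) ` Eqs D \<union> UEqs P \<union> (\<lambda>(p,q). (liftR p, liftR q)) ` Eqs E \<rparr>"

definition wf_upres :: "('s1,'f1) catpres \<Rightarrow> ('s2,'f2) catpres \<Rightarrow> ('s1,'f1,'s2,'f2,'g) upres \<Rightarrow> bool" where
  "wf_upres D E P \<longleftrightarrow> wf_catpres D \<and> wf_catpres E \<and>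
     (\<forall>x\<in>Gens P. gsrc P x \<in> Sorts D \<and> gtgt P x \<in> Sorts E) \<and>
     (\<forall>(p,q)\<in>UEqs P. \<exists>c d. is_path (total D E P) (Inl c) (Inr d) p \<and>
                            is_path (total D E P) (Inl c) (Inr d) q)"

definition finite_upres :: "('s1,'f1) catpres \<Rightarrow> ('s2,'f2) catpres \<Rightarrow> ('s1,'f1,'s2,'f2,'g) upres \<Rightarrow> bool" where
  "finite_upres D E P \<longleftrightarrow> finite_catpres D \<and> finite_catpres E \<and> finite (Gens P) \<and> finite (UEqs P)"

text \<open>Semantics [[P]] = [[|P|]] over 2: cross-morphisms are \<approx>-classes of cross-paths.\<close>
definition usem :: "('s1,'f1) catpres \<Rightarrow> ('s2,'f2) catpres \<Rightarrow> ('s1,'f1,'s2,'f2,'g) upres \<Rightarrow>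
    ('s1,'f1,'s2,'f2, ('s1 + 's2, 'f1 + 'g + 'f2) path set) prof" where
  "usem D E P = \<lparr> El = (\<lambda>c d. {pclass (total D E P) r | r. is_path (total D E P) (Inl c) (Inr d) r}),
     Lact = (\<lambda>p d X. \<Union>r\<in>X. pclass (total D E P) (pcomp (liftL p) r)),
     Ract = (\<lambda>q c X. \<Union>r\<in>X. pclass (total D E P) (pcomp r (liftR q))) \<rparr>"

definition fin_uncurried_presentable ::
  "('s1,'f1) catpres \<Rightarrow> ('s2,'f2) catpres \<Rightarrow> ('s1,'f1,'s2,'f2,'x) prof \<Rightarrow> bool" where
  "fin_uncurried_presentable D E Q \<longleftrightarrow>
     (\<exists>P :: ('s1,'f1,'s2,'f2,nat) upres. wf_upres D E P \<and> finite_upres D E P \<and>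
        prof_iso D E Q (usem D E P))"

definition unit_pres :: "(unit, unit) catpres" where
  "unit_pres = \<lparr> Sorts = {()}, Funs = {}, fdom = (\<lambda>_. ()), fcod = (\<lambda>_. ()), Eqs = {} \<rparr>"

text \<open>An E-instance presentation is an uncurried presentation 1 -/-> E.\<close>
type_synonym ('s2,'f2,'g) ipres = "(unit, unit, 's2, 'f2, 'g) upres"
type_synonym ('s2,'f2,'g) iterm = "(unit + 's2, unit + 'g + 'f2) path"

definition gterm :: "'g \<Rightarrow> ('s2,'f2,'g) iterm" where
  "gterm x = (Inl (), [Inr (Inl x)])"

text \<open>Action of an instance morphism on terms: F(x.g) := F(x).g\<close>
fun imor_app :: "('g \<Rightarrow> ('s2,'f2,'g) iterm) \<Rightarrow> ('s2,'f2,'g) iterm \<Rightarrow> ('s2,'f2,'g) iterm" where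
  "imor_app F (a, Inr (Inl x) # rest) = (fst (F x), snd (F x) @ rest)"
| "imor_app F t = t"

definition is_imor :: "('s2,'f2) catpres \<Rightarrow> ('s2,'f2,'g) ipres \<Rightarrow> ('s2,'f2,'g) ipres \<Rightarrow>
    ('g \<Rightarrow> ('s2,'f2,'g) iterm) \<Rightarrow> bool" where
  "is_imor E I J F \<longleftrightarrow>
     (\<forall>x\<in>Gens I. is_path (total unit_pres E J) (Inl ()) (Inr (gtgt I x)) (F x)) \<and>
     (\<forall>(t,t')\<in>UEqs I. peq (total unit_pres E J) (imor_app F t) (imor_app F t'))"

record ('s1,'f1,'s2,'f2,'g) cpres =
  Obj :: "'s1 \<Rightarrow> ('s2,'f2,'g) ipres"
  Mor :: "'f1 \<Rightarrow> 'g \<Rightarrow> ('s2,'f2,'g) iterm"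

text \<open>P(f_1 ... f_n) applied to a term: P(f_n) is applied first, P(f_1) last.\<close>
fun cact :: "('s1,'f1,'s2,'f2,'g) cpres \<Rightarrow> 'f1 list \<Rightarrow> ('s2,'f2,'g) iterm \<Rightarrow> ('s2,'f2,'g) iterm" where
  "cact P [] t = t"
| "cact P (f # fs) t = imor_app (Mor P f) (cact P fs t)"

definition wf_cpres :: "('s1,'f1) catpres \<Rightarrow> ('s2,'f2) catpres \<Rightarrow> ('s1,'f1,'s2,'f2,'g) cpres \<Rightarrow> bool" where
  "wf_cpres D E P \<longleftrightarrow> wf_catpres D \<and> wf_catpres E \<and>
     (\<forall>c\<in>Sorts D. wf_upres unit_pres E (Obj P c)) \<and>
     (\<forall>f\<in>Funs D. is_imor E (Obj P (fcod D f)) (Obj P (fdom D f)) (Mor P f)) \<and>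
     (\<forall>(p,p')\<in>Eqs D. \<forall>x\<in>Gens (Obj P (pend D (fst p) (snd p))).
        peq (total unit_pres E (Obj P (fst p))) (cact P (snd p) (gterm x)) (cact P (snd p') (gterm x)))"

definition finite_cpres :: "('s1,'f1) catpres \<Rightarrow> ('s2,'f2) catpres \<Rightarrow> ('s1,'f1,'s2,'f2,'g) cpres \<Rightarrow> bool" where
  "finite_cpres D E P \<longleftrightarrow> finite_catpres D \<and> finite_catpres E \<and>
     (\<forall>c\<in>Sorts D. finite (Gens (Obj P c)) \<and> finite (UEqs (Obj P c)))"

definition csem :: "('s1,'f1) catpres \<Rightarrow> ('s2,'f2) catpres \<Rightarrow> ('s1,'f1,'s2,'f2,'g) cpres \<Rightarrow>
    ('s1,'f1,'s2,'f2, ('s2,'f2,'g) iterm set) prof" where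
  "csem D E P = \<lparr>
     El = (\<lambda>c d. {pclass (total unit_pres E (Obj P c)) t | t.
                     is_path (total unit_pres E (Obj P c)) (Inl ()) (Inr d) t}),
     Lact = (\<lambda>p d X. \<Union>t\<in>X. pclass (total unit_pres E (Obj P (fst p))) (cact P (snd p) t)),
     Ract = (\<lambda>q c X. \<Union>t\<in>X. pclass (total unit_pres E (Obj P c)) (pcomp t (liftR q))) \<rparr>"

definition fin_curried_presentable ::
  "('s1,'f1) catpres \<Rightarrow> ('s2,'f2) catpres \<Rightarrow> ('s1,'f1,'s2,'f2,'x) prof \<Rightarrow> bool" where
  "fin_curried_presentable D E Q \<longleftrightarrow>
     (\<exists>P :: ('s1,'f1,'s2,'f2,nat) cpres. wf_cpres D E P \<and> finite_cpres D E P \<and>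
        prof_iso D E Q (csem D E P))"

end

theory Submission imports Defs begin

text \<open>Take for D the free monoid on one symbol f (a single sort 0, so that [[D]] is the
one-object category \<nat>) and for E the terminal category. The uncurried presentation with a
single generator x : 0 \<rightarrow> 0 and no equations has the infinitely many distinct cross-morphisms
f^n.x. In a curried presentation, on the other hand, each P(c) is an instance presentation
over a presentation without function symbols, so its only terms are its generators; finitely
many generators therefore give only finitely many cross-morphisms.\<close>

lemma chain_append: "chain C c (xs @ ys) \<longleftrightarrow> chain C c xs \<and> chain C (pend C c xs) ys"
  by (induction xs arbitrary: c) auto

lemma pend_append: "pend C c (xs @ ys) = pend C (pend C c xs) ys"
  by (induction xs arbitrary: c) auto

lemma is_path_pcomp: "is_path C a b p \<Longrightarrow> is_path C b e q \<Longrightarrow> is_path C a e (pcomp p q)"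
  unfolding is_path_def pcomp_def by (auto simp: chain_append pend_append)

lemma pcomp_assoc: "pcomp (pcomp p q) r = pcomp p (pcomp q r)"
  by (simp add: pcomp_def)

lemma peq_no_eqs: "peq C p q \<Longrightarrow> Eqs C = {} \<Longrightarrow> p = q"
  by (induction rule: peq.induct) auto

lemma pclass_no_eqs: "Eqs C = {} \<Longrightarrow> is_path C c c' p \<Longrightarrow> pclass C p = {p}"
  unfolding pclass_def by (auto intro: peq_refl dest: peq_no_eqs)

lemma total_simps [simp]:
  "Sorts (total D E P) = Inl ` Sorts D \<union> Inr ` Sorts E"
  "Funs (total D E P) = Inl ` Funs D \<union> (Inr \<circ> Inl) ` Gens P \<union> (Inr \<circ> Inr) ` Funs E"
  "fdom (total D E P) (Inl f) = Inl (fdom D f)"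
  "fdom (total D E P) (Inr (Inl x)) = Inl (gsrc P x)"
  "fdom (total D E P) (Inr (Inr g)) = Inr (fdom E g)"
  "fcod (total D E P) (Inl f) = Inl (fcod D f)"
  "fcod (total D E P) (Inr (Inl x)) = Inr (gtgt P x)"
  "fcod (total D E P) (Inr (Inr g)) = Inr (fcod E g)"
  by (simp_all add: total_def)

lemma Eqs_total_empty:
  "Eqs D = {} \<Longrightarrow> UEqs P = {} \<Longrightarrow> Eqs E = {} \<Longrightarrow> Eqs (total D E P) = {}"
  by (simp add: total_def)

lemma chain_map_Inl:
  "chain D c fs \<Longrightarrow> chain (total D E P) (Inl c) (map Inl fs) \<and>
     pend (total D E P) (Inl c) (map Inl fs) = Inl (pend D c fs)"
  by (induction fs arbitrary: c) auto

lemma chain_map_Inr_Inr: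
  "chain E d fs \<Longrightarrow> chain (total D E P) (Inr d) (map (Inr \<circ> Inr) fs) \<and>
     pend (total D E P) (Inr d) (map (Inr \<circ> Inr) fs) = Inr (pend E d fs)"
  by (induction fs arbitrary: d) auto

lemma is_path_liftL: "is_path D c c' p \<Longrightarrow> is_path (total D E P) (Inl c) (Inl c') (liftL p)"
  using chain_map_Inl[of D c "snd p" E P] by (simp add: is_path_def liftL_def)

lemma is_path_liftR: "is_path E d d' q \<Longrightarrow> is_path (total D E P) (Inr d) (Inr d') (liftR q)"
  using chain_map_Inr_Inr[of E d "snd q" D P] by (simp add: is_path_def liftR_def)

lemma is_path_pcomp_liftL:
  "is_path D c c' p \<Longrightarrow> is_path (total D E P) (Inl c') e r \<Longrightarrow>
     is_path (total D E P) (Inl c) e (pcomp (liftL p) r)"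
  by (rule is_path_pcomp[OF is_path_liftL])

lemma is_path_pcomp_liftR:
  "is_path (total D E P) a (Inr d) r \<Longrightarrow> is_path E d d' q \<Longrightarrow>
     is_path (total D E P) a (Inr d') (pcomp r (liftR q))"
  by (rule is_path_pcomp[OF _ is_path_liftR])

lemma liftL_pcomp: "liftL (pcomp p p') = pcomp (liftL p) (liftL p')"
  by (simp add: liftL_def pcomp_def)

lemma liftR_pcomp: "liftR (pcomp q q') = pcomp (liftR q) (liftR q')"
  by (simp add: liftR_def pcomp_def)

lemma pcomp_liftL_Nil: "is_path C (Inl c) e r \<Longrightarrow> pcomp (liftL (c, [])) r = r"
  by (cases r) (simp add: is_path_def liftL_def pcomp_def)

lemma pcomp_liftR_Nil: "pcomp r (liftR (d, [])) = r"
  by (simp add: liftR_def pcomp_def)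

context
  fixes D :: "('s1,'f1) catpres" and E :: "('s2,'f2) catpres" and P :: "('s1,'f1,'s2,'f2,'g) upres"
  assumes no_eqs: "Eqs D = {}" "UEqs P = {}" "Eqs E = {}"
begin

lemma El_usem_no_eqs:
  "x \<in> El (usem D E P) c d \<longleftrightarrow> (\<exists>r. x = {r} \<and> is_path (total D E P) (Inl c) (Inr d) r)"
  using pclass_no_eqs[OF Eqs_total_empty[OF no_eqs]] by (force simp: usem_def)

lemma Lact_usem_no_eqs:
  assumes "is_path D c c' p" and "is_path (total D E P) (Inl c') (Inr d) r"
  shows "Lact (usem D E P) p d {r} = {pcomp (liftL p) r}"
  using pclass_no_eqs[OF Eqs_total_empty[OF no_eqs] is_path_pcomp_liftL[OF assms]]
  by (simp add: usem_def)

lemma Ract_usem_no_eqs: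
  assumes "is_path E d d' q" and "is_path (total D E P) (Inl c) (Inr d) r"
  shows "Ract (usem D E P) q c {r} = {pcomp r (liftR q)}"
  using pclass_no_eqs[OF Eqs_total_empty[OF no_eqs] is_path_pcomp_liftR[OF assms(2,1)]]
  by (simp add: usem_def)

lemma is_profunctor_usem_no_eqs: "is_profunctor D E (usem D E P)"
  unfolding is_profunctor_def El_usem_no_eqs
proof (intro conjI allI impI; elim exE conjE)
  fix p c c' d x r
  assume "is_path D c c' p" "x = {r}" "is_path (total D E P) (Inl c') (Inr d) r"
  then show "\<exists>r'. Lact (usem D E P) p d x = {r'} \<and> is_path (total D E P) (Inl c) (Inr d) r'"
    by (simp add: Lact_usem_no_eqs is_path_pcomp_liftL)
next
  fix q d d' c x r
  assume "is_path E d d' q" "x = {r}" "is_path (total D E P) (Inl c) (Inr d) r"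
  then show "\<exists>r'. Ract (usem D E P) q c x = {r'} \<and> is_path (total D E P) (Inl c) (Inr d') r'"
    by (simp add: Ract_usem_no_eqs is_path_pcomp_liftR)
next
  fix c d x r
  assume "c \<in> Sorts D" "d \<in> Sorts E" "x = {r}" "is_path (total D E P) (Inl c) (Inr d) r"
  moreover have "is_path D c c (c, [])" "is_path E d d (d, [])"
    using \<open>c \<in> Sorts D\<close> \<open>d \<in> Sorts E\<close> by (simp_all add: is_path_def)
  ultimately show "Lact (usem D E P) (c, []) d x = x" "Ract (usem D E P) (d, []) c x = x"
    by (simp_all add: Lact_usem_no_eqs Ract_usem_no_eqs pcomp_liftL_Nil pcomp_liftR_Nil)
next
  fix p p' c c' c'' d x r
  assume p: "is_path D c c' p" "is_path D c' c'' p'"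
    and r: "x = {r}" "is_path (total D E P) (Inl c'') (Inr d) r"
  have "is_path D c c'' (pcomp p p')" "is_path (total D E P) (Inl c') (Inr d) (pcomp (liftL p') r)"
    using p r(2) by (simp_all add: is_path_pcomp is_path_pcomp_liftL)
  with p r show "Lact (usem D E P) (pcomp p p') d x =
      Lact (usem D E P) p d (Lact (usem D E P) p' d x)"
    by (simp add: Lact_usem_no_eqs liftL_pcomp pcomp_assoc)
next
  fix q q' d d' d'' c x r
  assume q: "is_path E d d' q" "is_path E d' d'' q'"
    and r: "x = {r}" "is_path (total D E P) (Inl c) (Inr d) r"
  have "is_path E d d'' (pcomp q q')" "is_path (total D E P) (Inl c) (Inr d') (pcomp r (liftR q))"
    using q r(2) by (simp_all add: is_path_pcomp is_path_pcomp_liftR)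
  with q r show "Ract (usem D E P) (pcomp q q') c x =
      Ract (usem D E P) q' c (Ract (usem D E P) q c x)"
    by (simp add: Ract_usem_no_eqs liftR_pcomp pcomp_assoc)
next
  fix p p' :: "('s1,'f1) path" and c c' d x r
  assume "peq D p p'"
  then show "Lact (usem D E P) p d x = Lact (usem D E P) p' d x"
    using no_eqs(1) peq_no_eqs by metis
next
  fix q q' :: "('s2,'f2) path" and d d' c x r
  assume "peq E q q'"
  then show "Ract (usem D E P) q c x = Ract (usem D E P) q' c x"
    using no_eqs(3) peq_no_eqs by metis
next
  fix p q c c' d d' x r
  assume "is_path D c c' p" "is_path E d d' q" "x = {r}" "is_path (total D E P) (Inl c') (Inr d) r"
  then show "Lact (usem D E P) p d' (Ract (usem D E P) q c' x) =
      Ract (usem D E P) q c (Lact (usem D E P) p d x)"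
    by (simp add: Lact_usem_no_eqs Ract_usem_no_eqs is_path_pcomp_liftL is_path_pcomp_liftR
        pcomp_assoc)
qed

lemma infinite_El_usem_loop:
  assumes f: "f \<in> Funs D" "fdom D f = c" "fcod D f = c" and c: "c \<in> Sorts D"
    and x: "x \<in> Gens P" "gsrc P x = c" "gtgt P x = d"
  shows "infinite (El (usem D E P) c d)"
proof -
  define r :: "nat \<Rightarrow> ('s1 + 's2, 'f1 + 'g + 'f2) path"
    where "r n = (Inl c, replicate n (Inl f) @ [Inr (Inl x)])" for n
  have "chain (total D E P) (Inl c) (replicate n (Inl f)) \<and> pend (total D E P) (Inl c) (replicate n (Inl f)) = Inl c"
    for n using f by (induction n) auto
  then have "is_path (total D E P) (Inl c) (Inr d) (r n)" for n
    using c x by (simp add: is_path_def r_def chain_append pend_append)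
  then have "range (\<lambda>n. {r n}) \<subseteq> El (usem D E P) c d"
    by (auto simp: El_usem_no_eqs)
  moreover have "inj (\<lambda>n. {r n})"
    by (auto simp: inj_def r_def)
  ultimately show ?thesis
    using infinite_UNIV_nat finite_imageD infinite_super by metis
qed

end

lemma prof_iso_refl: "prof_iso D E Q Q"
  unfolding prof_iso_def by (rule exI[of _ "\<lambda>c d x. x"]) (simp add: bij_betw_id[unfolded id_def])

lemma fin_uncurried_presentable_usem:
  fixes P :: "('s1,'f1,'s2,'f2,nat) upres"
  shows "wf_upres D E P \<Longrightarrow> finite_upres D E P \<Longrightarrow> fin_uncurried_presentable D E (usem D E P)"
  unfolding fin_uncurried_presentable_def using prof_iso_refl by blast

lemma instance_term_no_funs:
  assumes "Funs E = {}" and "is_path (total unit_pres E I) (Inl ()) (Inr d) t"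
  shows "t \<in> gterm ` Gens I"
proof -
  have no_chain_from_Inr: "chain (total unit_pres E I) (Inr d') fs \<Longrightarrow> fs = []" for d' fs
    using assms(1) by (cases fs) auto
  obtain fs where t: "t = (Inl (), fs)"
    using assms(2) by (cases t) (simp add: is_path_def)
  then have "fs \<noteq> []" and "chain (total unit_pres E I) (Inl ()) fs"
    using assms(2) by (auto simp: is_path_def)
  then obtain x gs where "fs = Inr (Inl x) # gs" "x \<in> Gens I"
      and "chain (total unit_pres E I) (Inr (gtgt I x)) gs"
    using assms(1) by (cases fs) (auto simp: unit_pres_def)
  then show ?thesis
    using t no_chain_from_Inr by (auto simp: gterm_def)
qed

lemma finite_El_csem_no_funs:
  assumes "Funs E = {}" and "finite (Gens (Obj P c))"
  shows "finite (El (csem D E P) c d)"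
proof -
  have "El (csem D E P) c d \<subseteq> pclass (total unit_pres E (Obj P c)) ` gterm ` Gens (Obj P c)"
    using instance_term_no_funs[OF assms(1)] by (force simp: csem_def)
  then show ?thesis
    using assms(2) by (simp add: finite_subset)
qed

lemma prof_iso_finite_El:
  assumes "prof_iso D E Q Q'" and "c \<in> Sorts D" and "d \<in> Sorts E"
  shows "finite (El Q c d) \<longleftrightarrow> finite (El Q' c d)"
  using assms bij_betw_finite by (fastforce simp: prof_iso_def)

lemma fin_curried_presentable_finite_El:
  fixes D :: "('s1,'f1) catpres" and E :: "('s2,'f2) catpres"
  assumes "fin_curried_presentable D E Q" and "Funs E = {}" and "c \<in> Sorts D" and "d \<in> Sorts E"
  shows "finite (El Q c d)"
proof -
  obtain P :: "('s1,'f1,'s2,'f2,nat) cpres"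
    where "finite_cpres D E P" and iso: "prof_iso D E Q (csem D E P)"
    using assms(1) unfolding fin_curried_presentable_def by blast
  then have "finite (Gens (Obj P c))"
    using assms(3) by (simp add: finite_cpres_def)
  then show ?thesis
    using finite_El_csem_no_funs[OF assms(2)] prof_iso_finite_El[OF iso assms(3,4)] by simp
qed

definition free_loop_pres :: "(nat, nat) catpres" where
  "free_loop_pres = \<lparr>Sorts = {0}, Funs = {0}, fdom = (\<lambda>_. 0), fcod = (\<lambda>_. 0), Eqs = {}\<rparr>"

definition point_pres :: "(nat, nat) catpres" where
  "point_pres = \<lparr>Sorts = {0}, Funs = {}, fdom = (\<lambda>_. 0), fcod = (\<lambda>_. 0), Eqs = {}\<rparr>"

definition single_gen_upres :: "(nat, nat, nat, nat, nat) upres" where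
  "single_gen_upres = \<lparr>Gens = {0}, gsrc = (\<lambda>_. 0), gtgt = (\<lambda>_. 0), UEqs = {}\<rparr>"

theorem mainTheorem7:
  shows "\<exists>(D :: (nat, nat) catpres) (E :: (nat, nat) catpres)
            (Q :: (nat, nat, nat, nat, (nat + nat, nat + nat + nat) path set) prof).
           wf_catpres D \<and> finite_catpres D \<and> wf_catpres E \<and> finite_catpres E \<and>
           is_profunctor D E Q \<and>
           fin_uncurried_presentable D E Q \<and> \<not> fin_curried_presentable D E Q"
proof (intro exI conjI)
  let ?D = free_loop_pres and ?E = point_pres and ?P = single_gen_upres
  have no_eqs: "Eqs ?D = {}" "UEqs ?P = {}" "Eqs ?E = {}"
    by (simp_all add: free_loop_pres_def single_gen_upres_def point_pres_def)
  show "wf_catpres ?D" "finite_catpres ?D" "wf_catpres ?E" "finite_catpres ?E"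
    by (simp_all add: wf_catpres_def finite_catpres_def free_loop_pres_def point_pres_def)
  show "is_profunctor ?D ?E (usem ?D ?E ?P)"
    using is_profunctor_usem_no_eqs[OF no_eqs] .
  show "fin_uncurried_presentable ?D ?E (usem ?D ?E ?P)"
    by (rule fin_uncurried_presentable_usem)
      (simp_all add: wf_upres_def finite_upres_def wf_catpres_def finite_catpres_def
        free_loop_pres_def point_pres_def single_gen_upres_def)
  have "infinite (El (usem ?D ?E ?P) 0 0)"
    by (rule infinite_El_usem_loop[OF no_eqs, of 0])
      (simp_all add: free_loop_pres_def single_gen_upres_def)
  then show "\<not> fin_curried_presentable ?D ?E (usem ?D ?E ?P)"
    using fin_curried_presentable_finite_El by (fastforce simp: point_pres_def free_loop_pres_def)
qed

end
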